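(* The attention-weighted rank fairness metric $AWRF$ does not satisfy deepness; that is, there exist a population $\mathcal D$, a candidate set $D\subseteq\mathcal D$, a ranking $r$ of $D$ and positions $i<j$ with $y(r(i))=y(r(j))$, $y(r(i+1))=y(r(j+1))$, and either ($r(i),r(j)\in G_0$ and $r(i+1),r(j+1)\in G_1$) or ($r(i),r(j)\in G_1$ and $r(i+1),r(j+1)\in G_0$), such that $|AWRF(r)-AWRF(r_{i\leftrightarrow i+1})|\le|AWRF(r)-AWRF(r_{j\leftrightarrow j+1})|$.
   Context: A population is a finite set $\mathcal{D}$ of candidates partitioned into two nonempty groups, a non-protected group $G_0$ and a protected group $G_1$; each candidate $d$ has a relevance score $y(d)\in\mathbb R$. Let $p_G=|G|/|\mathcal D|$ and $p_{\mathrm{groups}}=(p_{G_0},p_{G_1})$. For a candidate set $D\subseteq\mathcal D$ with $n=|D|$, a ranking is a bijection $r:\{1,\dots,n\}\to D$ and $r^{-1}(d)$ is the position of $d$; $r_{i\leftrightarrow j}$ is $r$ with the candidates at positions $i,j$ swapped. Position bias $b(k)=1/\log_2(k+1)$. $AWRF$: let $p_{\mathrm{Exp}}(r)=\frac{1}{\sum_{k=1}^n b(k)}\left(\sum_{d\in G_0\cap D} b(r^{-1}(d)),\ \sum_{d\in G_1\cap D} b(r^{-1}(d))\right)$, $p_{\mathrm{sum}}(r)=\frac12(p_{\mathrm{Exp}}(r)+p_{\mathrm{groups}})$, $\Delta_{KL}(p\|q)=\sum_i p_i\log_2(p_i/q_i)$ (with $0\log 0=0$), and $AWRF(r)=1-\left[\frac12\Delta_{KL}(p_{\mathrm{Exp}}(r)\|p_{\mathrm{sum}}(r))+\frac12\Delta_{KL}(p_{\mathrm{groups}}\|p_{\mathrm{sum}}(r))\right]$.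 *)

theory Defs
  imports Complex_Main
begin

text \<open>A population is a finite set
  Pop of candidates together with its protected group G1 (a subset of Pop);
  the non-protected group is G0 = Pop - G1. Positions are 1..n.\<close>

definition pos_bias :: "nat \<Rightarrow> real" where
  "pos_bias k = 1 / log 2 (real k + 1)"

definition is_population :: "nat set \<Rightarrow> nat set \<Rightarrow> bool" where
  "is_population Pop G1 \<longleftrightarrow> finite Pop \<and> G1 \<subseteq> Pop \<and> G1 \<noteq> {} \<and> Pop - G1 \<noteq> {}"

definition is_ranking :: "nat set \<Rightarrow> (nat \<Rightarrow> nat) \<Rightarrow> bool" where
  "is_ranking D r \<longleftrightarrow> bij_betw r {1..card D} D"

definition swap_pos :: "(nat \<Rightarrow> nat) \<Rightarrow> nat \<Rightarrow> nat \<Rightarrow> (nat \<Rightarrow> nat)" where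
  "swap_pos r i j = r(i := r j, j := r i)"

definition p_groups :: "nat set \<Rightarrow> nat set \<Rightarrow> real \<times> real" where
  "p_groups Pop G1 = (real (card (Pop - G1)) / real (card Pop), real (card G1) / real (card Pop))"

text \<open>Exposure distribution of a ranking r of a candidate set of size n
  (sums over positions k, equivalently over candidates d with k = r^-1(d)).\<close>
definition p_exp :: "nat set \<Rightarrow> nat set \<Rightarrow> nat \<Rightarrow> (nat \<Rightarrow> nat) \<Rightarrow> real \<times> real" where
  "p_exp Pop G1 n r =
     (let Z = (\<Sum>k=1..n. pos_bias k) in
      ((\<Sum>k\<in>{k\<in>{1..n}. r k \<in> Pop - G1}. pos_bias k) / Z,
       (\<Sum>k\<in>{k\<in>{1..n}. r k \<in> G1}. pos_bias k) / Z))"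

definition kl_term :: "real \<Rightarrow> real \<Rightarrow> real" where
  "kl_term p q = (if p = 0 then 0 else p * log 2 (p / q))"

definition kl2 :: "real \<times> real \<Rightarrow> real \<times> real \<Rightarrow> real" where
  "kl2 p q = kl_term (fst p) (fst q) + kl_term (snd p) (snd q)"

definition AWRF :: "nat set \<Rightarrow> nat set \<Rightarrow> nat \<Rightarrow> (nat \<Rightarrow> nat) \<Rightarrow> real" where
  "AWRF Pop G1 n r =
     (let pe = p_exp Pop G1 n r; pg = p_groups Pop G1;
          ps = ((fst pe + fst pg) / 2, (snd pe + snd pg) / 2)
      in 1 - (kl2 pe ps / 2 + kl2 pg ps / 2))"

end

theory Submission
  imports Defs
begin

text \<open>In a population split evenly between the two groups, AWRF is invariant under
  exchanging the roles of the groups, i.e. under exchanging the two components of the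
  exposure distribution. Take four candidates ranked in the alternating order
  G0, G1, G0, G1. Swapping positions 1 and 2 leaves G0 at positions {2, 3} and G1 at
  {1, 4}; swapping positions 3 and 4 does exactly the opposite. Hence both swaps yield
  the same AWRF, and the swap at the top of the ranking changes AWRF no more than the
  swap further down.\<close>

lemma kl2_swap: "kl2 (prod.swap p) (prod.swap q) = kl2 p q"
  by (simp add: kl2_def)

lemma p_groups_balanced:
  assumes "finite Pop" "G1 \<subseteq> Pop" "card Pop = 2 * card G1" "G1 \<noteq> {}"
  shows "p_groups Pop G1 = (1/2, 1/2)"
proof -
  have "card (Pop - G1) = card G1"
    using assms(1-3) by (simp add: card_Diff_subset finite_subset)
  moreover have "card G1 > 0"
    using assms(1,2,4) by (simp add: card_gt_0_iff finite_subset)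
  ultimately show ?thesis
    using assms(3) by (simp add: p_groups_def)
qed

lemma p_exp_eq_swap:
  assumes "{k\<in>{1..n}. r' k \<in> Pop - G1} = {k\<in>{1..n}. r k \<in> G1}"
    and "{k\<in>{1..n}. r' k \<in> G1} = {k\<in>{1..n}. r k \<in> Pop - G1}"
  shows "p_exp Pop G1 n r' = prod.swap (p_exp Pop G1 n r)"
  using assms by (simp add: p_exp_def Let_def)

lemma AWRF_eq_if_p_exp_swap:
  assumes "p_groups Pop G1 = (1/2, 1/2)"
    and "p_exp Pop G1 n r' = prod.swap (p_exp Pop G1 n r)"
  shows "AWRF Pop G1 n r' = AWRF Pop G1 n r"
proof -
  obtain a b where ab: "p_exp Pop G1 n r = (a, b)" by fastforce
  let ?q = "((a + 1/2) / 2, (b + 1/2) / 2)"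
  have "kl2 (b, a) (prod.swap ?q) = kl2 (a, b) ?q"
    using kl2_swap[of "(a, b)" ?q] by simp
  moreover have "kl2 (1/2, 1/2) (prod.swap ?q) = kl2 (1/2, 1/2) ?q"
    using kl2_swap[of "(1/2, 1/2)" ?q] by simp
  ultimately show ?thesis
    using assms ab by (simp add: AWRF_def Let_def)
qed

lemma AWRF_top_swap_eq_lower_swap:
  "AWRF {1,2,3,4} {2,4} 4 (swap_pos id 1 2) = AWRF {1,2,3,4} {2,4} 4 (swap_pos id 3 4)"
proof (rule AWRF_eq_if_p_exp_swap[symmetric])
  show "p_groups {1,2,3,4} {2,4} = (1/2, 1/2)"
    by (rule p_groups_balanced) simp_all
  show "p_exp {1,2,3,4} {2,4} 4 (swap_pos id 3 4) = prod.swap (p_exp {1,2,3,4} {2,4} 4 (swap_pos id 1 2))"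
    by (rule p_exp_eq_swap) (auto simp: swap_pos_def)
qed

theorem theorem9:
  shows "\<exists>(Pop::nat set) G1 (y::nat \<Rightarrow> real) D r i j.
     is_population Pop G1 \<and> D \<subseteq> Pop \<and> is_ranking D r \<and>
     1 \<le> i \<and> i < j \<and> j + 1 \<le> card D \<and>
     y (r i) = y (r j) \<and> y (r (i+1)) = y (r (j+1)) \<and>
     ((r i \<in> Pop - G1 \<and> r j \<in> Pop - G1 \<and> r (i+1) \<in> G1 \<and> r (j+1) \<in> G1) \<or>
      (r i \<in> G1 \<and> r j \<in> G1 \<and> r (i+1) \<in> Pop - G1 \<and> r (j+1) \<in> Pop - G1)) \<and>
     \<bar>AWRF Pop G1 (card D) r - AWRF Pop G1 (card D) (swap_pos r i (i+1))\<bar>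
       \<le> \<bar>AWRF Pop G1 (card D) r - AWRF Pop G1 (card D) (swap_pos r j (j+1))\<bar>"
proof -
  let ?D = "{1,2,3,4::nat}"
  have card_D: "card ?D = 4" by simp
  have "is_population ?D {2,4}" by (auto simp: is_population_def)
  moreover have "is_ranking ?D id"
    unfolding is_ranking_def card_D by (auto simp: bij_betw_def)
  ultimately show ?thesis
    using AWRF_top_swap_eq_lower_swap
    by - (rule exI[of _ ?D], rule exI[of _ "{2,4}"], rule exI[of _ "\<lambda>_. 0"], rule exI[of _ ?D],
        rule exI[of _ id], rule exI[of _ 1], rule exI[of _ 3],
        simp only: card_D, simp add: numeral_2_eq_2)
qed

end
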